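(* Let $\Gamma$ be a connected $3$-plane drawing. Then \[ 4|E_\times| \;\ge\; 2N(B_4)+2N(B_5)+2N(U_5)+2N(U_6). \]
   Context: Drawings are on the sphere: vertices are distinct points, edges (of a graph possibly with parallel edges, no loops) are Jordan arcs; any two edges share finitely many points, each a common endpoint or a proper crossing; no three edges cross at one point; no edge crosses itself; adjacent edges do not cross. A drawing is $3$-plane if every edge is crossed at most three times. For $i\in\{0,1,2,3\}$, $E_i$ is the set of edges with exactly $i$ crossings, and $E_\times=E_1\cup E_2\cup E_3$. An edge with $i$ crossings is split into $i+1$ edge-segments; an edge-segment is inner if both its endpoints are crossings and outer otherwise. The planarization replaces each crossing by a degree-$4$ vertex; the drawing is connected if its planarization is connected. Cells are the components of the sphere minus all vertices and edges; the boundary of a cell is a cyclic sequence alternating between edge-segments and vertices/crossings. Cell types: $B_4$: boundary $v$, outer segment, crossing, inner segment, crossing, outer segment. $B_5$: boundary $v$, outer segment, crossing, inner segment, crossing, inner segment, crossing, outer segment. $U_5$: boundary $u$, uncrossed edge $uv$, $v$, outer segment, crossing, outer segment (two vertices $u,v$). $U_6$: boundary $u$, uncrossed edge $uv$, $v$, outer segment, crossing, inner segment, crossing, outer segment. $N(T)$ is the number of cells of type $T$. *)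

theory Defs
  imports "HOL-Analysis.Analysis"
begin

text \<open>Topological drawings on the unit sphere S2 in R^3.
  A drawing is given by a finite vertex set V (points of S2), a finite edge index set E
  (parallel edges allowed) and for each edge e an arc g e :: real => real^3 on [0,1]
  whose endpoints are its end vertices.\<close>

definition S2 :: "(real^3) set" where
  "S2 = sphere 0 1"

definition ends :: "(real \<Rightarrow> real^3) \<Rightarrow> (real^3) set" where
  "ends \<gamma> = {pathstart \<gamma>, pathfinish \<gamma>}"

text \<open>Proper crossing of two arcs A, B at p: locally near p the pair looks like the two
  coordinate axes in a disc.\<close>
definition proper_crossing :: "(real^3) set \<Rightarrow> (real^3) set \<Rightarrow> real^3 \<Rightarrow> bool" where
  "proper_crossing A B p \<longleftrightarrow>
     (\<exists>U h k. openin (top_of_set S2) U \<and> p \<in> U \<and>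
        homeomorphism U (ball (0::complex) 1) h k \<and> h p = 0 \<and>
        h ` (U \<inter> A) = {z \<in> ball 0 1. Im z = 0} \<and>
        h ` (U \<inter> B) = {z \<in> ball 0 1. Re z = 0})"

definition drawing :: "(real^3) set \<Rightarrow> 'e set \<Rightarrow> ('e \<Rightarrow> real \<Rightarrow> real^3) \<Rightarrow> bool" where
  "drawing V E g \<longleftrightarrow>
     finite V \<and> V \<subseteq> S2 \<and> finite E \<and>
     (\<forall>e\<in>E. arc (g e) \<and> path_image (g e) \<subseteq> S2 \<and>
              pathstart (g e) \<in> V \<and> pathfinish (g e) \<in> V \<and>
              path_image (g e) \<inter> V = ends (g e)) \<and>
     (\<forall>e\<in>E. \<forall>f\<in>E. e \<noteq> f \<longrightarrow>
         finite (path_image (g e) \<inter> path_image (g f)) \<and>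
         (\<forall>p \<in> path_image (g e) \<inter> path_image (g f).
             (p \<in> ends (g e) \<and> p \<in> ends (g f)) \<or>
             (p \<notin> V \<and> proper_crossing (path_image (g e)) (path_image (g f)) p))) \<and>
     (\<forall>e\<in>E. \<forall>f\<in>E. \<forall>h\<in>E. e \<noteq> f \<and> e \<noteq> h \<and> f \<noteq> h \<longrightarrow>
         path_image (g e) \<inter> path_image (g f) \<inter> path_image (g h) \<subseteq> V) \<and>
     (\<forall>e\<in>E. \<forall>f\<in>E. e \<noteq> f \<and> ends (g e) \<inter> ends (g f) \<noteq> {} \<longrightarrow>
         path_image (g e) \<inter> path_image (g f) \<subseteq> V)"

definition crossing_pts :: "(real^3) set \<Rightarrow> 'e set \<Rightarrow> ('e \<Rightarrow> real \<Rightarrow> real^3) \<Rightarrow> (real^3) set" where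
  "crossing_pts V E g =
     {p. p \<notin> V \<and> (\<exists>e\<in>E. \<exists>f\<in>E. e \<noteq> f \<and> p \<in> path_image (g e) \<and> p \<in> path_image (g f))}"

definition pnodes :: "(real^3) set \<Rightarrow> 'e set \<Rightarrow> ('e \<Rightarrow> real \<Rightarrow> real^3) \<Rightarrow> (real^3) set" where
  "pnodes V E g = V \<union> crossing_pts V E g"

definition num_cr :: "(real^3) set \<Rightarrow> 'e set \<Rightarrow> ('e \<Rightarrow> real \<Rightarrow> real^3) \<Rightarrow> 'e \<Rightarrow> nat" where
  "num_cr V E g e = card (path_image (g e) \<inter> crossing_pts V E g)"

definition edges_with_cr :: "(real^3) set \<Rightarrow> 'e set \<Rightarrow> ('e \<Rightarrow> real \<Rightarrow> real^3) \<Rightarrow> nat \<Rightarrow> 'e set" where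
  "edges_with_cr V E g i = {e \<in> E. num_cr V E g e = i}"

definition crossed_edges :: "(real^3) set \<Rightarrow> 'e set \<Rightarrow> ('e \<Rightarrow> real \<Rightarrow> real^3) \<Rightarrow> 'e set" where
  "crossed_edges V E g = edges_with_cr V E g 1 \<union> edges_with_cr V E g 2 \<union> edges_with_cr V E g 3"

definition three_plane :: "(real^3) set \<Rightarrow> 'e set \<Rightarrow> ('e \<Rightarrow> real \<Rightarrow> real^3) \<Rightarrow> bool" where
  "three_plane V E g \<longleftrightarrow> (\<forall>e\<in>E. num_cr V E g e \<le> 3)"

definition seg_of :: "(real^3) set \<Rightarrow> 'e set \<Rightarrow> ('e \<Rightarrow> real \<Rightarrow> real^3) \<Rightarrow> 'e \<Rightarrow> real \<Rightarrow> real \<Rightarrow> bool" where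
  "seg_of V E g e a b \<longleftrightarrow> e \<in> E \<and> 0 \<le> a \<and> a < b \<and> b \<le> 1 \<and>
      g e a \<in> pnodes V E g \<and> g e b \<in> pnodes V E g \<and>
      (\<forall>t. a < t \<and> t < b \<longrightarrow> g e t \<notin> pnodes V E g)"

definition seg_between :: "(real^3) set \<Rightarrow> 'e set \<Rightarrow> ('e \<Rightarrow> real \<Rightarrow> real^3) \<Rightarrow>
    (real^3) set \<Rightarrow> real^3 \<Rightarrow> real^3 \<Rightarrow> bool" where
  "seg_between V E g s x y \<longleftrightarrow>
     (\<exists>e a b. seg_of V E g e a b \<and> s = g e ` {a..b} \<and> {x, y} = {g e a, g e b})"

definition uncrossed_edge_between :: "(real^3) set \<Rightarrow> 'e set \<Rightarrow> ('e \<Rightarrow> real \<Rightarrow> real^3) \<Rightarrow>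
    (real^3) set \<Rightarrow> real^3 \<Rightarrow> real^3 \<Rightarrow> bool" where
  "uncrossed_edge_between V E g s u v \<longleftrightarrow>
     (\<exists>e\<in>E. num_cr V E g e = 0 \<and> s = path_image (g e) \<and> {u, v} = ends (g e))"

definition connected_drawing :: "(real^3) set \<Rightarrow> 'e set \<Rightarrow> ('e \<Rightarrow> real \<Rightarrow> real^3) \<Rightarrow> bool" where
  "connected_drawing V E g \<longleftrightarrow>
     (\<forall>x\<in>pnodes V E g. \<forall>y\<in>pnodes V E g.
        (x, y) \<in> {(a, b). \<exists>s. seg_between V E g s a b}\<^sup>*)"

definition drawing_set :: "(real^3) set \<Rightarrow> 'e set \<Rightarrow> ('e \<Rightarrow> real \<Rightarrow> real^3) \<Rightarrow> (real^3) set" where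
  "drawing_set V E g = V \<union> (\<Union>e\<in>E. path_image (g e))"

definition cells :: "(real^3) set \<Rightarrow> 'e set \<Rightarrow> ('e \<Rightarrow> real \<Rightarrow> real^3) \<Rightarrow> (real^3) set set" where
  "cells V E g = components (S2 - drawing_set V E g)"

text \<open>A cell whose boundary walk is a simple cycle of the planarization has exactly the point
  set of that cycle as its boundary, and conversely; the cell types below are all of this
  form.\<close>
definition cell_bd :: "(real^3) set \<Rightarrow> (real^3) set" where
  "cell_bd F = closure F - F"

definition is_B4 :: "(real^3) set \<Rightarrow> 'e set \<Rightarrow> ('e \<Rightarrow> real \<Rightarrow> real^3) \<Rightarrow> (real^3) set \<Rightarrow> bool" where
  "is_B4 V E g F \<longleftrightarrow>
     (\<exists>v c1 c2 s1 s2 s3. v \<in> V \<and> c1 \<in> crossing_pts V E g \<and> c2 \<in> crossing_pts V E g \<and>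
        c1 \<noteq> c2 \<and>
        seg_between V E g s1 v c1 \<and> seg_between V E g s2 c1 c2 \<and> seg_between V E g s3 c2 v \<and>
        cell_bd F = s1 \<union> s2 \<union> s3)"

definition is_B5 :: "(real^3) set \<Rightarrow> 'e set \<Rightarrow> ('e \<Rightarrow> real \<Rightarrow> real^3) \<Rightarrow> (real^3) set \<Rightarrow> bool" where
  "is_B5 V E g F \<longleftrightarrow>
     (\<exists>v c1 c2 c3 s1 s2 s3 s4. v \<in> V \<and> c1 \<in> crossing_pts V E g \<and>
        c2 \<in> crossing_pts V E g \<and> c3 \<in> crossing_pts V E g \<and>
        c1 \<noteq> c2 \<and> c1 \<noteq> c3 \<and> c2 \<noteq> c3 \<and>
        seg_between V E g s1 v c1 \<and> seg_between V E g s2 c1 c2 \<and>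
        seg_between V E g s3 c2 c3 \<and> seg_between V E g s4 c3 v \<and>
        cell_bd F = s1 \<union> s2 \<union> s3 \<union> s4)"

definition is_U5 :: "(real^3) set \<Rightarrow> 'e set \<Rightarrow> ('e \<Rightarrow> real \<Rightarrow> real^3) \<Rightarrow> (real^3) set \<Rightarrow> bool" where
  "is_U5 V E g F \<longleftrightarrow>
     (\<exists>u v c s0 s1 s2. u \<in> V \<and> v \<in> V \<and> u \<noteq> v \<and> c \<in> crossing_pts V E g \<and>
        uncrossed_edge_between V E g s0 u v \<and>
        seg_between V E g s1 v c \<and> seg_between V E g s2 c u \<and>
        cell_bd F = s0 \<union> s1 \<union> s2)"

definition is_U6 :: "(real^3) set \<Rightarrow> 'e set \<Rightarrow> ('e \<Rightarrow> real \<Rightarrow> real^3) \<Rightarrow> (real^3) set \<Rightarrow> bool" where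
  "is_U6 V E g F \<longleftrightarrow>
     (\<exists>u v c1 c2 s0 s1 s2 s3. u \<in> V \<and> v \<in> V \<and> u \<noteq> v \<and>
        c1 \<in> crossing_pts V E g \<and> c2 \<in> crossing_pts V E g \<and> c1 \<noteq> c2 \<and>
        uncrossed_edge_between V E g s0 u v \<and>
        seg_between V E g s1 v c1 \<and> seg_between V E g s2 c1 c2 \<and> seg_between V E g s3 c2 u \<and>
        cell_bd F = s0 \<union> s1 \<union> s2 \<union> s3)"

definition num_cells :: "(real^3) set \<Rightarrow> 'e set \<Rightarrow> ('e \<Rightarrow> real \<Rightarrow> real^3) \<Rightarrow>
    ((real^3) set \<Rightarrow> 'e set \<Rightarrow> ('e \<Rightarrow> real \<Rightarrow> real^3) \<Rightarrow> (real^3) set \<Rightarrow> bool) \<Rightarrow> nat" where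
  "num_cells V E g T = card {F \<in> cells V E g. T V E g F}"

end

theory Submission
  imports Defs
begin

text \<open>Call an edge-segment outer if it joins a vertex to a crossing. A crossed edge has at most
  two outer segments, its first and its last, so there are at most \<open>2 |E\<^sub>\<times>|\<close> of them. Every
  cell of type \<open>B\<^sub>4\<close>, \<open>B\<^sub>5\<close>, \<open>U\<^sub>5\<close> or \<open>U\<^sub>6\<close> has two distinct outer segments on its boundary. An outer
  segment lies in the closure of at most two cells: a chart at its crossing turns the two edges
  through the crossing into the coordinate axes, and a cell touching a point of an axis contains
  one of the two open quadrants next to that point. Double counting the incidences between outer
  segments and these cells gives \<open>2 N \<le> 2 \<cdot> 2 |E\<^sub>\<times>|\<close> for their number \<open>N\<close>, and \<open>N\<close> is the sum of
  the four counts because the types differ in the numbers of vertices and crossings on the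
  boundary.\<close>

lemma finite_card_le_if_unique_rel:
  assumes "finite B"
    and "\<And>a. a \<in> A \<Longrightarrow> \<exists>b\<in>B. r a b"
    and "\<And>a a' b. a \<in> A \<Longrightarrow> a' \<in> A \<Longrightarrow> b \<in> B \<Longrightarrow> r a b \<Longrightarrow> r a' b \<Longrightarrow> a = a'"
  shows "finite A" "card A \<le> card B"
proof -
  have "finite {a \<in> A. r a b}" if "b \<in> B" for b
  proof (cases "{a \<in> A. r a b} = {}")
    case False
    then obtain a where "a \<in> A" "r a b" by blast
    then have "{a \<in> A. r a b} \<subseteq> {a}" using assms(3) that by blast
    then show ?thesis using finite_subset by blast
  qed (metis finite.emptyI)
  moreover have "A \<subseteq> (\<Union>b\<in>B. {a \<in> A. r a b})" using assms(2) by blast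
  ultimately show "finite A" using assms(1) by (meson finite_UN_I finite_subset)
  show "card A \<le> card B"
    by (rule card_le_if_inj_on_rel[OF assms(1), where r = r]) (use assms(2,3) in blast)+
qed

lemma double_counting_le:
  fixes m n :: nat
  assumes "finite B" and "0 < m"
    and "\<And>a. a \<in> A \<Longrightarrow> m \<le> card {b \<in> B. r a b}"
    and "\<And>b. b \<in> B \<Longrightarrow> finite {a \<in> A. r a b} \<and> card {a \<in> A. r a b} \<le> n"
  shows "finite A" "m * card A \<le> n * card B"
proof -
  have "A \<subseteq> (\<Union>b\<in>B. {a \<in> A. r a b})"
  proof
    fix a assume "a \<in> A"
    then have "{b \<in> B. r a b} \<noteq> {}" using assms(2,3) by (metis card.empty not_less0 le_0_eq)
    then show "a \<in> (\<Union>b\<in>B. {a \<in> A. r a b})" using \<open>a \<in> A\<close> by blast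
  qed
  then show fin: "finite A" using assms(1,4) by (meson finite_UN_I finite_subset)
  have "m * card A = (\<Sum>a\<in>A. m)" by simp
  also have "\<dots> \<le> (\<Sum>a\<in>A. card {b \<in> B. r a b})" using assms(3) by (rule sum_mono)
  also have "\<dots> = (\<Sum>b\<in>B. card {a \<in> A. r a b})"
    using sum.swap_restrict[OF fin assms(1), of "\<lambda>_ _. 1::nat" r] by simp
  also have "\<dots> \<le> (\<Sum>b\<in>B. n)" using assms(4) by (intro sum_mono) blast
  finally show "m * card A \<le> n * card B" by (simp add: mult.commute)
qed

definition quadrant :: "real \<Rightarrow> bool \<Rightarrow> bool \<Rightarrow> complex set" where
  "quadrant r s t = {z. cmod z < r \<and> (if s then 0 < Re z else Re z < 0) \<and> (if t then 0 < Im z else Im z < 0)}"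

text \<open>For \<open>w \<noteq> 0\<close> on one of the axes: the two quadrants bordering on \<open>w\<close>.\<close>
definition quadrants_at :: "real \<Rightarrow> complex \<Rightarrow> complex set set" where
  "quadrants_at r w =
     (if Im w = 0 then range (\<lambda>t. quadrant r (0 < Re w) t) else range (\<lambda>s. quadrant r s (0 < Im w)))"

lemma convex_quadrant: "convex (quadrant r s t)"
proof -
  have "quadrant r s t = ball 0 r \<inter> (if s then {z. 0 < Re z} else {z. Re z < 0})
      \<inter> (if t then {z. 0 < Im z} else {z. Im z < 0})"
    by (auto simp: quadrant_def)
  then show ?thesis
    by (simp add: convex_Int convex_halfspace_Re_gt convex_halfspace_Re_lt
        convex_halfspace_Im_gt convex_halfspace_Im_lt)
qed

lemma quadrant_nonempty:
  assumes "0 < r"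
  shows "quadrant r s t \<noteq> {}"
proof -
  define z where "z = Complex (if s then r/4 else -r/4) (if t then r/4 else -r/4)"
  have "cmod z \<le> \<bar>Re z\<bar> + \<bar>Im z\<bar>" by (rule cmod_le)
  also have "\<dots> < r" using assms by (simp add: z_def)
  finally have "z \<in> quadrant r s t" using assms by (auto simp: quadrant_def z_def)
  then show ?thesis by blast
qed

lemma quadrant_subset_ball: "quadrant r s t \<subseteq> ball 0 r"
  by (auto simp: quadrant_def)

lemma quadrant_off_axes: "z \<in> quadrant r s t \<Longrightarrow> Re z \<noteq> 0 \<and> Im z \<noteq> 0"
  by (auto simp: quadrant_def split: if_splits)

lemma finite_quadrants_at: "finite (quadrants_at r w)"
  by (simp add: quadrants_at_def)

lemma card_quadrants_at: "card (quadrants_at r w) \<le> 2"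
proof -
  have "card (range f) \<le> 2" for f :: "bool \<Rightarrow> complex set"
    using card_image_le[of "UNIV :: bool set" f] by simp
  then show ?thesis by (simp add: quadrants_at_def)
qed

lemma quadrants_atE:
  assumes "q \<in> quadrants_at r w"
  obtains s t where "q = quadrant r s t"
  using assms by (auto simp: quadrants_at_def split: if_splits)

lemma mem_quadrants_at:
  assumes "w \<noteq> 0" "Re w = 0 \<or> Im w = 0" "cmod w < r"
    and "dist z w < min (cmod w) (r - cmod w)" "Re z \<noteq> 0" "Im z \<noteq> 0"
  shows "\<exists>q \<in> quadrants_at r w. z \<in> q"
proof -
  have "cmod z \<le> cmod w + cmod (z - w)" using norm_triangle_ineq[of w "z - w"] by simp
  then have "cmod z < r" using assms(4) by (simp add: dist_norm)
  have near: "cmod (z - w) < cmod w" using assms(4) by (simp add: dist_norm)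
  show ?thesis
  proof (cases "Im w = 0")
    case True
    have "\<bar>Re z - Re w\<bar> < \<bar>Re w\<bar>"
      using abs_Re_le_cmod[of "z - w"] near cmod_eq_Re[OF True] by simp
    then have "z \<in> quadrant r (0 < Re w) (0 < Im z)"
      using \<open>cmod z < r\<close> assms(6) by (auto simp: quadrant_def)
    then show ?thesis using True by (auto simp: quadrants_at_def)
  next
    case False
    then have "Re w = 0" using assms(2) by blast
    have "\<bar>Im z - Im w\<bar> < \<bar>Im w\<bar>"
      using abs_Im_le_cmod[of "z - w"] near cmod_eq_Im[OF \<open>Re w = 0\<close>] by simp
    then have "z \<in> quadrant r (0 < Re z) (0 < Im w)"
      using \<open>cmod z < r\<close> assms(5) by (auto simp: quadrant_def)
    then show ?thesis using False by (auto simp: quadrants_at_def)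
  qed
qed

locale crossing_chart =
  fixes V :: "(real^3) set" and E :: "'e set" and g :: "'e \<Rightarrow> real \<Rightarrow> real^3"
    and c :: "real^3" and e1 f1 :: 'e
    and U :: "(real^3) set" and h :: "real^3 \<Rightarrow> complex" and k :: "complex \<Rightarrow> real^3"
    and r :: real
  assumes edges: "e1 \<in> E" "f1 \<in> E"
    and chart_open: "openin (top_of_set S2) U"
    and center: "c \<in> U" "h c = 0"
    and chart: "homeomorphism U (ball 0 1) h k"
    and real_axis: "h ` (U \<inter> path_image (g e1)) = {z \<in> ball 0 1. Im z = 0}"
    and imag_axis: "h ` (U \<inter> path_image (g f1)) = {z \<in> ball 0 1. Re z = 0}"
    and radius: "0 < r" "r \<le> 1"
    and only_two_edges: "\<And>z. z \<in> ball 0 r \<Longrightarrow> k z \<in> drawing_set V E g \<Longrightarrow>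
      k z \<in> path_image (g e1) \<union> path_image (g f1)"
begin

lemma k_center: "k 0 = c"
  using chart center by (metis homeomorphism_def)

lemma ball_r_subset: "ball 0 r \<subseteq> ball 0 1"
  using radius by auto

lemma openin_image:
  assumes "open W" "W \<subseteq> ball 0 1"
  shows "openin (top_of_set S2) (k ` W)"
proof -
  have "openin (top_of_set U) (k ` W)"
    using homeomorphism_imp_open_map[OF homeomorphism_sym[THEN iffD1, OF chart]] assms
    by (simp add: openin_open_eq)
  then show ?thesis using chart_open by (rule openin_trans)
qed

lemma axis_image_in_drawing:
  assumes "z \<in> ball 0 1" "Re z = 0 \<or> Im z = 0"
  shows "k z \<in> drawing_set V E g"
proof -
  have "z \<in> h ` (U \<inter> (path_image (g e1) \<union> path_image (g f1)))"
    using assms real_axis imag_axis by blast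
  then have "k z \<in> path_image (g e1) \<union> path_image (g f1)"
    using chart by (auto simp: homeomorphism_def)
  then show ?thesis using edges by (auto simp: drawing_set_def)
qed

lemma quadrant_image_in_complement: "k ` quadrant r s t \<subseteq> S2 - drawing_set V E g"
proof
  fix x assume "x \<in> k ` quadrant r s t"
  then obtain z where z: "z \<in> quadrant r s t" "x = k z" by blast
  then have zr: "z \<in> ball 0 r" using quadrant_subset_ball by blast
  then have z1: "z \<in> ball 0 1" using ball_r_subset by blast
  have "x \<in> U" using z(2) z1 homeomorphism_image2[OF chart] by blast
  then have "x \<in> S2" using openin_subset[OF chart_open] by auto
  moreover have "x \<notin> drawing_set V E g"
  proof
    assume "x \<in> drawing_set V E g"
    then have "x \<in> U \<inter> (path_image (g e1) \<union> path_image (g f1))"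
      using only_two_edges[OF zr] z(2) \<open>x \<in> U\<close> by blast
    then have "h x \<in> {z \<in> ball 0 1. Im z = 0 \<or> Re z = 0}"
      using real_axis imag_axis by blast
    moreover have "h x = z" using z(2) z1 homeomorphism_apply2[OF chart] by blast
    ultimately show False using quadrant_off_axes[OF z(1)] by auto
  qed
  ultimately show "x \<in> S2 - drawing_set V E g" by blast
qed

lemma quadrant_image_subset_cell:
  assumes "F \<in> cells V E g" "F \<inter> k ` quadrant r s t \<noteq> {}"
  shows "k ` quadrant r s t \<subseteq> F"
proof -
  have "continuous_on (quadrant r s t) k"
    using chart quadrant_subset_ball ball_r_subset
    by (metis continuous_on_subset homeomorphism_def order_trans)
  then have "connected (k ` quadrant r s t)"
    using convex_quadrant convex_connected connected_continuous_image by blast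
  then show ?thesis
    using components_maximal quadrant_image_in_complement assms unfolding cells_def by blast
qed

lemma closure_cell_contains_quadrant:
  assumes w: "w \<in> ball 0 r" "w \<noteq> 0" "Re w = 0 \<or> Im w = 0"
    and F: "F \<in> cells V E g" "k w \<in> closure F"
  shows "\<exists>q \<in> quadrants_at r w. k ` q \<subseteq> F"
proof -
  define \<rho> where "\<rho> = min (cmod w) (r - cmod w)"
  have "ball w \<rho> \<subseteq> ball 0 r"
  proof
    fix z assume "z \<in> ball w \<rho>"
    then have "cmod (z - w) < r - cmod w" by (simp add: \<rho>_def dist_norm norm_minus_commute)
    then show "z \<in> ball 0 r" using norm_triangle_ineq[of w "z - w"] by simp
  qed
  then have "openin (top_of_set S2) (k ` ball w \<rho>)"
    using openin_image ball_r_subset by blast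
  then obtain N where N: "open N" "k ` ball w \<rho> = S2 \<inter> N" by (auto simp: openin_open)
  have "0 < \<rho>" using w by (auto simp: \<rho>_def)
  then have "k w \<in> N" using N(2) by auto
  then obtain x where x: "x \<in> N" "x \<in> F"
    using F(2) N(1) open_Int_closure_eq_empty by blast
  have "F \<subseteq> S2 - drawing_set V E g" using F(1) in_components_subset unfolding cells_def by blast
  then have "x \<in> k ` ball w \<rho>" "x \<notin> drawing_set V E g" using x N(2) by auto
  then obtain z where z: "z \<in> ball w \<rho>" "x = k z" by blast
  then have "z \<in> ball 0 1" using \<open>ball w \<rho> \<subseteq> ball 0 r\<close> ball_r_subset by blast
  then have "Re z \<noteq> 0" "Im z \<noteq> 0"
    using axis_image_in_drawing[of z] z(2) \<open>x \<notin> drawing_set V E g\<close> by auto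
  then obtain q where "q \<in> quadrants_at r w" "z \<in> q"
    using mem_quadrants_at[of w r z] w z(1) by (auto simp: \<rho>_def dist_commute)
  moreover obtain s t where "q = quadrant r s t" using quadrants_atE calculation(1) by blast
  ultimately show ?thesis using quadrant_image_subset_cell F(1) x(2) z(2) by blast
qed

lemma cells_at_edge_point:
  assumes "p \<in> k ` ball 0 r" "p \<in> path_image (g e1) \<union> path_image (g f1)" "p \<noteq> c"
  shows "finite {F \<in> cells V E g. p \<in> closure F}" "card {F \<in> cells V E g. p \<in> closure F} \<le> 2"
proof -
  obtain w where w: "w \<in> ball 0 r" "p = k w" using assms(1) by blast
  then have "w \<in> ball 0 1" using ball_r_subset by blast
  then have "p \<in> U" "h p = w"
    using w(2) homeomorphism_image2[OF chart] homeomorphism_apply2[OF chart] by blast+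
  then have axis: "Re w = 0 \<or> Im w = 0" using assms(2) real_axis imag_axis by blast
  have "w \<noteq> 0" using w(2) assms(3) k_center by blast
  let ?C = "{F \<in> cells V E g. p \<in> closure F}"
  have "\<exists>q \<in> quadrants_at r w. k ` q \<subseteq> F" if "F \<in> ?C" for F
    using closure_cell_contains_quadrant[OF w(1) \<open>w \<noteq> 0\<close> axis] that w(2) by blast
  moreover have "F = F'"
    if FF': "F \<in> ?C" "F' \<in> ?C" and q: "q \<in> quadrants_at r w" "k ` q \<subseteq> F" "k ` q \<subseteq> F'"
    for F F' q
  proof -
    obtain s t where "q = quadrant r s t" using q(1) by (rule quadrants_atE)
    then have "q \<noteq> {}" using quadrant_nonempty[OF radius(1)] by blast
    then have "F \<inter> F' \<noteq> {}" using q(2,3) by blast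
    then show ?thesis using components_nonoverlap FF' unfolding cells_def by blast
  qed
  ultimately have "finite ?C" "card ?C \<le> card (quadrants_at r w)"
    by (rule finite_card_le_if_unique_rel[OF finite_quadrants_at], blast+)+
  then show "finite ?C" "card ?C \<le> 2" using card_quadrants_at[of r w] by simp_all
qed

end

lemma seg_between_pnodes:
  assumes "seg_between V E g s x y"
  shows "s \<inter> pnodes V E g = {x, y}"
proof -
  obtain e a b where seg: "seg_of V E g e a b" "s = g e ` {a..b}" "{x, y} = {g e a, g e b}"
    using assms unfolding seg_between_def by blast
  have "t = a \<or> t = b" if "t \<in> {a..b}" "g e t \<in> pnodes V E g" for t
    using seg(1) that unfolding seg_of_def by force
  then have "s \<inter> pnodes V E g \<subseteq> {g e a, g e b}" unfolding seg(2) by blast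
  moreover have "{g e a, g e b} \<subseteq> s \<inter> pnodes V E g"
    using seg(1,2) unfolding seg_of_def by auto
  ultimately show ?thesis using seg(3) by blast
qed

lemma seg_of_unique_end: "seg_of V E g e a b \<Longrightarrow> seg_of V E g e a b' \<Longrightarrow> b = b'"
  unfolding seg_of_def by (meson linorder_neqE_linordered_idom)

lemma seg_of_unique_start: "seg_of V E g e a b \<Longrightarrow> seg_of V E g e a' b \<Longrightarrow> a = a'"
  unfolding seg_of_def by (meson linorder_neqE_linordered_idom)

definition outer_segments :: "(real^3) set \<Rightarrow> 'e set \<Rightarrow> ('e \<Rightarrow> real \<Rightarrow> real^3) \<Rightarrow> (real^3) set set"
  where "outer_segments V E g = {s. \<exists>x\<in>V. \<exists>c\<in>crossing_pts V E g. seg_between V E g s x c}"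

definition boundary_profile ::
    "(real^3) set \<Rightarrow> 'e set \<Rightarrow> ('e \<Rightarrow> real \<Rightarrow> real^3) \<Rightarrow> (real^3) set \<Rightarrow> nat \<times> nat"
  where "boundary_profile V E g F = (card (cell_bd F \<inter> V), card (cell_bd F \<inter> crossing_pts V E g))"

lemma crossing_pts_notin_V: "c \<in> crossing_pts V E g \<Longrightarrow> c \<notin> V"
  unfolding crossing_pts_def by blast

lemma seg_between_commute: "seg_between V E g s x y \<longleftrightarrow> seg_between V E g s y x"
  unfolding seg_between_def by (simp add: insert_commute)

lemma outer_segmentI:
  "seg_between V E g s x c \<Longrightarrow> x \<in> V \<Longrightarrow> c \<in> crossing_pts V E g \<Longrightarrow> s \<in> outer_segments V E g"
  unfolding outer_segments_def by blast

lemma outer_segment_ends_unique: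
  assumes "seg_between V E g s x c" "seg_between V E g s x' c'"
    and "x \<in> V" "x' \<in> V" "c \<in> crossing_pts V E g" "c' \<in> crossing_pts V E g"
  shows "x = x' \<and> c = c'"
proof -
  have "{x, c} = {x', c'}" using assms(1,2) seg_between_pnodes by metis
  then show ?thesis using assms(3-6) crossing_pts_notin_V by (metis doubleton_eq_iff)
qed

lemma boundary_profile_eq:
  assumes "cell_bd F \<inter> pnodes V E g = P"
  shows "boundary_profile V E g F = (card (P \<inter> V), card (P \<inter> crossing_pts V E g))"
proof -
  have "cell_bd F \<inter> V = P \<inter> V" "cell_bd F \<inter> crossing_pts V E g = P \<inter> crossing_pts V E g"
    using assms unfolding pnodes_def by auto
  then show ?thesis by (simp add: boundary_profile_def)
qed

context
  fixes V :: "(real^3) set" and E :: "'e set" and g :: "'e \<Rightarrow> real \<Rightarrow> real^3"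
  assumes drawing: "drawing V E g"
begin

lemma drawing_finite: "finite V" "finite E"
  using drawing unfolding drawing_def by simp_all

lemma drawing_vertices_in_S2: "V \<subseteq> S2"
  using drawing unfolding drawing_def by simp

lemma drawing_edge:
  assumes "e \<in> E"
  shows "arc (g e)" "path_image (g e) \<subseteq> S2" "path_image (g e) \<inter> V = ends (g e)"
  using drawing assms unfolding drawing_def by simp_all

lemma edge_param_in_V:
  assumes "e \<in> E" "t \<in> {0..1}" "g e t \<in> V"
  shows "t = 0 \<or> t = 1"
proof -
  have "g e t \<in> ends (g e)"
    using drawing_edge(3)[OF assms(1)] assms(2,3) by (auto simp: path_image_def)
  then have "g e t = g e 0 \<or> g e t = g e 1" by (auto simp: ends_def pathstart_def pathfinish_def)
  moreover have "inj_on (g e) {0..1}" using drawing_edge(1)[OF assms(1)] by (simp add: arc_def)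
  ultimately show ?thesis using assms(2) by (auto dest: inj_onD)
qed

lemma finite_edge_intersection:
  assumes "e \<in> E" "f \<in> E" "e \<noteq> f"
  shows "finite (path_image (g e) \<inter> path_image (g f))"
  using drawing assms unfolding drawing_def by simp

lemma drawing_proper_crossing:
  assumes "e \<in> E" "f \<in> E" "e \<noteq> f"
    and "p \<in> path_image (g e)" "p \<in> path_image (g f)" "p \<notin> ends (g e)"
  shows "proper_crossing (path_image (g e)) (path_image (g f)) p"
proof -
  have "\<forall>p \<in> path_image (g e) \<inter> path_image (g f).
      (p \<in> ends (g e) \<and> p \<in> ends (g f)) \<or>
      (p \<notin> V \<and> proper_crossing (path_image (g e)) (path_image (g f)) p)"
    using drawing assms(1-3) unfolding drawing_def by simp
  then show ?thesis using assms(4-6) by blast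
qed

lemma drawing_no_triple_crossing:
  assumes "e \<in> E" "f \<in> E" "e' \<in> E" "e \<noteq> f" "e \<noteq> e'" "f \<noteq> e'"
    and "p \<in> path_image (g e)" "p \<in> path_image (g f)" "p \<in> path_image (g e')"
  shows "p \<in> V"
proof -
  have "path_image (g e) \<inter> path_image (g f) \<inter> path_image (g e') \<subseteq> V"
    using drawing assms(1-6) unfolding drawing_def by simp
  then show ?thesis using assms(7-9) by blast
qed

lemma finite_crossings_on_edge:
  assumes "e \<in> E"
  shows "finite (path_image (g e) \<inter> crossing_pts V E g)"
proof -
  have "path_image (g e) \<inter> crossing_pts V E g \<subseteq> (\<Union>f\<in>E-{e}. path_image (g e) \<inter> path_image (g f))"
    unfolding crossing_pts_def by blast
  moreover have "finite (path_image (g e) \<inter> path_image (g f))" if "f \<in> E - {e}" for f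
    using finite_edge_intersection assms that by blast
  ultimately show ?thesis using drawing_finite(2) by (meson finite_Diff finite_UN_I finite_subset)
qed

lemma crossingE:
  assumes "c \<in> crossing_pts V E g"
  obtains e1 f1 where "e1 \<in> E" "f1 \<in> E"
    "proper_crossing (path_image (g e1)) (path_image (g f1)) c"
    "\<And>e. e \<in> E \<Longrightarrow> c \<in> path_image (g e) \<Longrightarrow> e = e1 \<or> e = f1"
proof -
  obtain e1 f1 where ef: "e1 \<in> E" "f1 \<in> E" "e1 \<noteq> f1" "c \<notin> V"
    "c \<in> path_image (g e1)" "c \<in> path_image (g f1)"
    using assms unfolding crossing_pts_def by blast
  have "c \<notin> ends (g e1)" using ef(1,4) drawing_edge(3)[OF ef(1)] by (auto simp: ends_def)
  then have "proper_crossing (path_image (g e1)) (path_image (g f1)) c"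
    using drawing_proper_crossing ef by blast
  moreover have "e = e1 \<or> e = f1" if "e \<in> E" "c \<in> path_image (g e)" for e
    using drawing_no_triple_crossing[of e e1 f1 c] ef that by blast
  ultimately show ?thesis using that ef by blast
qed

text \<open>The vertices and the edges not through the crossing form a closed set missing it.\<close>
lemma crossing_isolated:
  assumes "c \<notin> V" "\<And>e. e \<in> E \<Longrightarrow> c \<in> path_image (g e) \<Longrightarrow> e = e1 \<or> e = f1"
  obtains \<delta> where "\<delta> > 0"
    "\<And>y. y \<in> ball c \<delta> \<Longrightarrow> y \<in> drawing_set V E g \<Longrightarrow> y \<in> path_image (g e1) \<union> path_image (g f1)"
proof -
  define D where "D = V \<union> (\<Union>e\<in>E - {e1, f1}. path_image (g e))"
  have "closed D" unfolding D_def
    using drawing_finite drawing_edge(1)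
    by (intro closed_Un closed_UN finite_imp_closed) (auto intro: closed_path_image arc_imp_path)
  moreover have "c \<notin> D" unfolding D_def using assms by auto
  ultimately obtain \<delta> where "\<delta> > 0" "ball c \<delta> \<subseteq> - D"
    by (metis Compl_iff open_Compl open_contains_ball)
  then show ?thesis using that unfolding D_def drawing_set_def by blast
qed

lemma crossing_chart_exists:
  assumes "c \<in> crossing_pts V E g"
  obtains e1 f1 U h k r where "crossing_chart V E g c e1 f1 U h k r"
proof -
  obtain e1 f1 where ef: "e1 \<in> E" "f1 \<in> E"
    "proper_crossing (path_image (g e1)) (path_image (g f1)) c"
    "\<And>e. e \<in> E \<Longrightarrow> c \<in> path_image (g e) \<Longrightarrow> e = e1 \<or> e = f1"
    using crossingE[OF assms] by metis
  obtain U h k where U: "openin (top_of_set S2) U" "c \<in> U" "h c = 0"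
    "homeomorphism U (ball 0 1) h k"
    "h ` (U \<inter> path_image (g e1)) = {z \<in> ball 0 1. Im z = 0}"
    "h ` (U \<inter> path_image (g f1)) = {z \<in> ball 0 1. Re z = 0}"
    using ef(3) unfolding proper_crossing_def by blast
  have "c \<notin> V" using assms unfolding crossing_pts_def by blast
  then obtain \<delta> where \<delta>: "\<delta> > 0"
    "\<And>y. y \<in> ball c \<delta> \<Longrightarrow> y \<in> drawing_set V E g \<Longrightarrow> y \<in> path_image (g e1) \<union> path_image (g f1)"
    using crossing_isolated[OF _ ef(4)] by blast
  have "k 0 = c" using U(2-4) by (metis homeomorphism_apply1)
  moreover have "continuous_on (ball 0 1) k" using U(4) by (rule homeomorphism_cont2)
  ultimately obtain d where d: "d > 0" "\<And>z. z \<in> ball 0 1 \<Longrightarrow> dist z 0 < d \<Longrightarrow> dist (k z) c < \<delta>"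
    using \<delta>(1) unfolding continuous_on_iff by (metis centre_in_ball zero_less_one)
  define r where "r = min d 1"
  have "k z \<in> path_image (g e1) \<union> path_image (g f1)"
    if "z \<in> ball 0 r" "k z \<in> drawing_set V E g" for z
    using d(2)[of z] \<delta>(2)[of "k z"] that by (simp add: r_def dist_commute)
  then have "crossing_chart V E g c e1 f1 U h k r"
    using ef(1,2) U d(1) by unfold_locales (auto simp: r_def)
  then show ?thesis by (rule that)
qed

lemma drawing_set_subset_S2: "drawing_set V E g \<subseteq> S2"
  using drawing_vertices_in_S2 drawing_edge(2) unfolding drawing_set_def by blast

lemma cells_touching_connected_at_crossing:
  assumes "connected s" "s \<subseteq> drawing_set V E g" "c \<in> s" "c \<in> crossing_pts V E g"
    and "\<And>x. s \<noteq> {x}"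
  shows "finite {F \<in> cells V E g. s \<subseteq> closure F}" "card {F \<in> cells V E g. s \<subseteq> closure F} \<le> 2"
proof -
  obtain e1 f1 U h k r where "crossing_chart V E g c e1 f1 U h k r"
    using crossing_chart_exists[OF assms(4)] .
  then interpret crossing_chart V E g c e1 f1 U h k r .
  obtain N where N: "open N" "k ` ball 0 r = S2 \<inter> N"
    using openin_image[OF open_ball ball_r_subset] by (auto simp: openin_open)
  have "c \<in> N" using N(2) k_center radius(1) by force
  moreover have "c islimpt s" using connected_imp_perfect assms(1,3,5) by blast
  ultimately obtain p where p: "p \<in> s" "p \<in> N" "p \<noteq> c" using N(1) islimptE by metis
  then have p_chart: "p \<in> k ` ball 0 r" using N(2) assms(2) drawing_set_subset_S2 by blast
  then have "p \<in> path_image (g e1) \<union> path_image (g f1)"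
    using only_two_edges assms(2) p(1) by blast
  then have fin: "finite {F \<in> cells V E g. p \<in> closure F}"
    and card: "card {F \<in> cells V E g. p \<in> closure F} \<le> 2"
    using cells_at_edge_point[OF p_chart _ p(3)] by blast+
  have sub: "{F \<in> cells V E g. s \<subseteq> closure F} \<subseteq> {F \<in> cells V E g. p \<in> closure F}"
    using p(1) by blast
  show "finite {F \<in> cells V E g. s \<subseteq> closure F}" using finite_subset[OF sub fin] .
  show "card {F \<in> cells V E g. s \<subseteq> closure F} \<le> 2" using card_mono[OF fin sub] card by linarith
qed

lemma cells_touching_outer_segment:
  assumes "s \<in> outer_segments V E g"
  shows "finite {F \<in> cells V E g. s \<subseteq> closure F}" "card {F \<in> cells V E g. s \<subseteq> closure F} \<le> 2"
proof -
  obtain x c e a b where c: "c \<in> crossing_pts V E g"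
    and seg: "seg_of V E g e a b" "s = g e ` {a..b}" "{x, c} = {g e a, g e b}"
    using assms unfolding outer_segments_def seg_between_def by blast
  have ab: "e \<in> E" "{a..b} \<subseteq> {0..1}" "a \<in> {0..1}" "b \<in> {0..1}" "a < b"
    using seg(1) unfolding seg_of_def by auto
  have "continuous_on {0..1} (g e)" using drawing_edge(1)[OF ab(1)] by (simp add: arc_def path_def)
  then have "connected s" unfolding seg(2) using ab(2)
    by (meson connected_Icc connected_continuous_image continuous_on_subset)
  moreover have "s \<subseteq> drawing_set V E g"
    using seg(2) ab(1,2) unfolding drawing_set_def path_image_def by blast
  moreover have "c \<in> s"
  proof -
    have "c \<in> {g e a, g e b}" using seg(3) by blast
    then show ?thesis using seg(2) ab(5) by auto
  qed
  moreover have "s \<noteq> {y}" for y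
  proof -
    have "g e a \<noteq> g e b"
      using drawing_edge(1)[OF ab(1)] ab(3-5) by (auto simp: arc_def dest: inj_onD)
    moreover have "g e a \<in> s" "g e b \<in> s" using seg(2) ab(5) by auto
    ultimately show ?thesis by (metis singletonD)
  qed
  ultimately show "finite {F \<in> cells V E g. s \<subseteq> closure F}"
    "card {F \<in> cells V E g. s \<subseteq> closure F} \<le> 2"
    using cells_touching_connected_at_crossing c by blast+
qed

lemma uncrossed_edge_between_pnodes:
  assumes "uncrossed_edge_between V E g s u v"
  shows "s \<inter> pnodes V E g = {u, v}"
proof -
  obtain e where e: "e \<in> E" "num_cr V E g e = 0" "s = path_image (g e)" "{u, v} = ends (g e)"
    using assms unfolding uncrossed_edge_between_def by blast
  have "path_image (g e) \<inter> crossing_pts V E g = {}"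
    using e(2) finite_crossings_on_edge[OF e(1)] unfolding num_cr_def by simp
  moreover have "s \<inter> pnodes V E g = (path_image (g e) \<inter> V) \<union> (path_image (g e) \<inter> crossing_pts V E g)"
    unfolding pnodes_def e(3) by blast
  ultimately show ?thesis using e(4) drawing_edge(3)[OF e(1)] by simp
qed

lemma crossed_edgeI:
  assumes "three_plane V E g" "e \<in> E" "c \<in> path_image (g e)" "c \<in> crossing_pts V E g"
  shows "e \<in> crossed_edges V E g"
proof -
  have "num_cr V E g e \<noteq> 0"
    using assms(3,4) finite_crossings_on_edge[OF assms(2)] unfolding num_cr_def by auto
  moreover have "num_cr V E g e \<le> 3" using assms(1,2) unfolding three_plane_def by blast
  ultimately show ?thesis
    using assms(2) unfolding crossed_edges_def edges_with_cr_def by auto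
qed

text \<open>An outer segment starts or ends at a vertex, which is an end of its edge.\<close>
lemma outer_segment_at_edge_end:
  assumes "three_plane V E g" "s \<in> outer_segments V E g"
  obtains e a b where "seg_of V E g e a b" "s = g e ` {a..b}" "a = 0 \<or> b = 1"
    "e \<in> crossed_edges V E g"
proof -
  obtain x c e a b where x: "x \<in> V" "c \<in> crossing_pts V E g"
    and seg: "seg_of V E g e a b" "s = g e ` {a..b}" "{x, c} = {g e a, g e b}"
    using assms(2) unfolding outer_segments_def seg_between_def by blast
  have ab: "e \<in> E" "a \<in> {0..1}" "b \<in> {0..1}" "a < b" using seg(1) unfolding seg_of_def by auto
  have "c \<in> path_image (g e)" using seg(3) ab unfolding path_image_def by blast
  then have "e \<in> crossed_edges V E g" using crossed_edgeI assms(1) ab(1) x(2) by blast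
  moreover have "x = g e a \<or> x = g e b" using seg(3) by (metis doubleton_eq_iff)
  then have "a = 0 \<or> a = 1 \<or> b = 0 \<or> b = 1" using edge_param_in_V[OF ab(1)] ab x(1) by metis
  then have "a = 0 \<or> b = 1" using ab by auto
  ultimately show ?thesis using that seg by blast
qed

lemma outer_segments_card:
  assumes "three_plane V E g"
  shows "finite (outer_segments V E g)" "card (outer_segments V E g) \<le> 2 * card (crossed_edges V E g)"
proof -
  let ?B = "crossed_edges V E g \<times> (UNIV :: bool set)"
  define at_end where "at_end s = (\<lambda>(e, first). \<exists>a b. seg_of V E g e a b \<and> s = g e ` {a..b} \<and>
      (if first then a = 0 else b = 1))" for s
  have "finite (crossed_edges V E g)"
    using drawing_finite(2) unfolding crossed_edges_def edges_with_cr_def by auto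
  then have finB: "finite ?B" by simp
  have "\<exists>w \<in> ?B. at_end s w" if s: "s \<in> outer_segments V E g" for s
  proof -
    obtain e a b where "seg_of V E g e a b" "s = g e ` {a..b}" "a = 0 \<or> b = 1"
      "e \<in> crossed_edges V E g"
      by (rule outer_segment_at_edge_end[OF assms s])
    then show ?thesis unfolding at_end_def
      by (intro bexI[of _ "(e, a = 0)"]) auto
  qed
  moreover have "s = s'" if ends: "at_end s w" "at_end s' w" for s s' w
  proof -
    obtain e first where w: "w = (e, first)" by fastforce
    obtain a b a' b' where seg: "seg_of V E g e a b" "seg_of V E g e a' b'"
      and s: "s = g e ` {a..b}" "s' = g e ` {a'..b'}"
      and first: "if first then a = 0 else b = 1" "if first then a' = 0 else b' = 1"
      using ends unfolding at_end_def w prod.case by blast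
    have "a = a' \<and> b = b'"
    proof (cases first)
      case True
      then show ?thesis using first seg seg_of_unique_end by metis
    next
      case False
      then show ?thesis using first seg seg_of_unique_start by metis
    qed
    then show ?thesis using s by simp
  qed
  ultimately have "finite (outer_segments V E g)" "card (outer_segments V E g) \<le> card ?B"
    by (rule finite_card_le_if_unique_rel[OF finB], blast+)+
  then show "finite (outer_segments V E g)"
    "card (outer_segments V E g) \<le> 2 * card (crossed_edges V E g)"
    by (simp_all add: card_cartesian_product)
qed

lemma is_B4_boundary:
  assumes "is_B4 V E g F"
  shows "boundary_profile V E g F = (1, 2)"
    and "\<exists>s s'. s \<in> outer_segments V E g \<and> s' \<in> outer_segments V E g \<and> s \<noteq> s' \<and> s \<union> s' \<subseteq> cell_bd F"
proof -
  obtain v c1 c2 s1 s2 s3 where B: "v \<in> V" "c1 \<in> crossing_pts V E g" "c2 \<in> crossing_pts V E g"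
    "c1 \<noteq> c2" "seg_between V E g s1 v c1" "seg_between V E g s2 c1 c2" "seg_between V E g s3 c2 v"
    "cell_bd F = s1 \<union> s2 \<union> s3"
    using assms unfolding is_B4_def by blast
  have P: "cell_bd F \<inter> pnodes V E g = {v, c1, c2}"
    unfolding B(8) Int_Un_distrib2 seg_between_pnodes[OF B(5)] seg_between_pnodes[OF B(6)]
      seg_between_pnodes[OF B(7)] by blast
  have "{v, c1, c2} \<inter> V = {v}" "{v, c1, c2} \<inter> crossing_pts V E g = {c1, c2}"
    using B(1) crossing_pts_notin_V[OF B(2)] crossing_pts_notin_V[OF B(3)] B(2,3)
      crossing_pts_notin_V[of v V E g] by auto
  then show "boundary_profile V E g F = (1, 2)"
    using boundary_profile_eq[OF P] B(4) by simp
  have s3: "seg_between V E g s3 v c2" using B(7) seg_between_commute by metis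
  have "s1 \<noteq> s3"
  proof
    assume "s1 = s3"
    then have "c1 = c2" using outer_segment_ends_unique[OF B(5) _ B(1,1,2,3)] s3 by simp
    with B(4) show False by simp
  qed
  moreover have "s1 \<in> outer_segments V E g" "s3 \<in> outer_segments V E g"
    using outer_segmentI[OF B(5) B(1,2)] outer_segmentI[OF s3 B(1,3)] .
  moreover have "s1 \<union> s3 \<subseteq> cell_bd F" using B(8) by blast
  ultimately show "\<exists>s s'. s \<in> outer_segments V E g \<and> s' \<in> outer_segments V E g \<and> s \<noteq> s' \<and>
      s \<union> s' \<subseteq> cell_bd F"
    by blast
qed

lemma is_B5_boundary:
  assumes "is_B5 V E g F"
  shows "boundary_profile V E g F = (1, 3)"
    and "\<exists>s s'. s \<in> outer_segments V E g \<and> s' \<in> outer_segments V E g \<and> s \<noteq> s' \<and> s \<union> s' \<subseteq> cell_bd F"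
proof -
  obtain v c1 c2 c3 s1 s2 s3 s4 where B: "v \<in> V" "c1 \<in> crossing_pts V E g"
    "c2 \<in> crossing_pts V E g" "c3 \<in> crossing_pts V E g" "c1 \<noteq> c2" "c1 \<noteq> c3" "c2 \<noteq> c3"
    "seg_between V E g s1 v c1" "seg_between V E g s2 c1 c2" "seg_between V E g s3 c2 c3"
    "seg_between V E g s4 c3 v" "cell_bd F = s1 \<union> s2 \<union> s3 \<union> s4"
    using assms unfolding is_B5_def by blast
  have P: "cell_bd F \<inter> pnodes V E g = {v, c1, c2, c3}"
    unfolding B(12) Int_Un_distrib2 seg_between_pnodes[OF B(8)] seg_between_pnodes[OF B(9)]
      seg_between_pnodes[OF B(10)] seg_between_pnodes[OF B(11)] by blast
  have "{v, c1, c2, c3} \<inter> V = {v}" "{v, c1, c2, c3} \<inter> crossing_pts V E g = {c1, c2, c3}"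
    using B(1-4) crossing_pts_notin_V[OF B(2)] crossing_pts_notin_V[OF B(3)]
      crossing_pts_notin_V[OF B(4)] crossing_pts_notin_V[of v V E g] by auto
  then show "boundary_profile V E g F = (1, 3)"
    using boundary_profile_eq[OF P] B(5-7) by simp
  have s4: "seg_between V E g s4 v c3" using B(11) seg_between_commute by metis
  have "s1 \<noteq> s4"
  proof
    assume "s1 = s4"
    then have "c1 = c3" using outer_segment_ends_unique[OF B(8) _ B(1,1,2,4)] s4 by simp
    with B(6) show False by simp
  qed
  moreover have "s1 \<in> outer_segments V E g" "s4 \<in> outer_segments V E g"
    using outer_segmentI[OF B(8) B(1,2)] outer_segmentI[OF s4 B(1,4)] .
  moreover have "s1 \<union> s4 \<subseteq> cell_bd F" using B(12) by blast
  ultimately show "\<exists>s s'. s \<in> outer_segments V E g \<and> s' \<in> outer_segments V E g \<and> s \<noteq> s' \<and>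
      s \<union> s' \<subseteq> cell_bd F"
    by blast
qed

lemma is_U5_boundary:
  assumes "is_U5 V E g F"
  shows "boundary_profile V E g F = (2, 1)"
    and "\<exists>s s'. s \<in> outer_segments V E g \<and> s' \<in> outer_segments V E g \<and> s \<noteq> s' \<and> s \<union> s' \<subseteq> cell_bd F"
proof -
  obtain u v c s0 s1 s2 where B: "u \<in> V" "v \<in> V" "u \<noteq> v" "c \<in> crossing_pts V E g"
    "uncrossed_edge_between V E g s0 u v" "seg_between V E g s1 v c" "seg_between V E g s2 c u"
    "cell_bd F = s0 \<union> s1 \<union> s2"
    using assms unfolding is_U5_def by blast
  have P: "cell_bd F \<inter> pnodes V E g = {u, v, c}"
    unfolding B(8) Int_Un_distrib2 uncrossed_edge_between_pnodes[OF B(5)]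
      seg_between_pnodes[OF B(6)] seg_between_pnodes[OF B(7)] by blast
  have "{u, v, c} \<inter> V = {u, v}" "{u, v, c} \<inter> crossing_pts V E g = {c}"
    using B(1,2,4) crossing_pts_notin_V[OF B(4)] crossing_pts_notin_V[of u V E g]
      crossing_pts_notin_V[of v V E g] by auto
  then show "boundary_profile V E g F = (2, 1)"
    using boundary_profile_eq[OF P] B(3) by simp
  have s2: "seg_between V E g s2 u c" using B(7) seg_between_commute by metis
  have "s1 \<noteq> s2"
  proof
    assume "s1 = s2"
    then have "v = u" using outer_segment_ends_unique[OF B(6) _ B(2,1,4,4)] s2 by simp
    with B(3) show False by simp
  qed
  moreover have "s1 \<in> outer_segments V E g" "s2 \<in> outer_segments V E g"
    using outer_segmentI[OF B(6) B(2,4)] outer_segmentI[OF s2 B(1,4)] .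
  moreover have "s1 \<union> s2 \<subseteq> cell_bd F" using B(8) by blast
  ultimately show "\<exists>s s'. s \<in> outer_segments V E g \<and> s' \<in> outer_segments V E g \<and> s \<noteq> s' \<and>
      s \<union> s' \<subseteq> cell_bd F"
    by blast
qed

lemma is_U6_boundary:
  assumes "is_U6 V E g F"
  shows "boundary_profile V E g F = (2, 2)"
    and "\<exists>s s'. s \<in> outer_segments V E g \<and> s' \<in> outer_segments V E g \<and> s \<noteq> s' \<and> s \<union> s' \<subseteq> cell_bd F"
proof -
  obtain u v c1 c2 s0 s1 s2 s3 where B: "u \<in> V" "v \<in> V" "u \<noteq> v"
    "c1 \<in> crossing_pts V E g" "c2 \<in> crossing_pts V E g" "c1 \<noteq> c2"
    "uncrossed_edge_between V E g s0 u v" "seg_between V E g s1 v c1"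
    "seg_between V E g s2 c1 c2" "seg_between V E g s3 c2 u" "cell_bd F = s0 \<union> s1 \<union> s2 \<union> s3"
    using assms unfolding is_U6_def by blast
  have P: "cell_bd F \<inter> pnodes V E g = {u, v, c1, c2}"
    unfolding B(11) Int_Un_distrib2 uncrossed_edge_between_pnodes[OF B(7)]
      seg_between_pnodes[OF B(8)] seg_between_pnodes[OF B(9)] seg_between_pnodes[OF B(10)] by blast
  have "{u, v, c1, c2} \<inter> V = {u, v}" "{u, v, c1, c2} \<inter> crossing_pts V E g = {c1, c2}"
    using B(1,2,4,5) crossing_pts_notin_V[OF B(4)] crossing_pts_notin_V[OF B(5)]
      crossing_pts_notin_V[of u V E g] crossing_pts_notin_V[of v V E g] by auto
  then show "boundary_profile V E g F = (2, 2)"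
    using boundary_profile_eq[OF P] B(3,6) by simp
  have s3: "seg_between V E g s3 u c2" using B(10) seg_between_commute by metis
  have "s1 \<noteq> s3"
  proof
    assume "s1 = s3"
    then have "v = u" using outer_segment_ends_unique[OF B(8) _ B(2,1,4,5)] s3 by simp
    with B(3) show False by simp
  qed
  moreover have "s1 \<in> outer_segments V E g" "s3 \<in> outer_segments V E g"
    using outer_segmentI[OF B(8) B(2,4)] outer_segmentI[OF s3 B(1,5)] .
  moreover have "s1 \<union> s3 \<subseteq> cell_bd F" using B(11) by blast
  ultimately show "\<exists>s s'. s \<in> outer_segments V E g \<and> s' \<in> outer_segments V E g \<and> s \<noteq> s' \<and>
      s \<union> s' \<subseteq> cell_bd F"
    by blast
qed

lemma four_types_outer_segments:
  assumes "is_B4 V E g F \<or> is_B5 V E g F \<or> is_U5 V E g F \<or> is_U6 V E g F"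
  shows "\<exists>s s'. s \<in> outer_segments V E g \<and> s' \<in> outer_segments V E g \<and> s \<noteq> s' \<and> s \<union> s' \<subseteq> cell_bd F"
  using assms
  by (elim disjE) (rule is_B4_boundary(2) is_B5_boundary(2) is_U5_boundary(2) is_U6_boundary(2);
      assumption)+

lemma card_cells_of_four_types:
  assumes "finite {F \<in> cells V E g. is_B4 V E g F \<or> is_B5 V E g F \<or> is_U5 V E g F \<or> is_U6 V E g F}"
  shows "card {F \<in> cells V E g. is_B4 V E g F \<or> is_B5 V E g F \<or> is_U5 V E g F \<or> is_U6 V E g F} =
    num_cells V E g is_B4 + num_cells V E g is_B5 + num_cells V E g is_U5 + num_cells V E g is_U6"
proof -
  define T where "T P = {F \<in> cells V E g. P V E g F}"
    for P :: "(real^3) set \<Rightarrow> 'e set \<Rightarrow> ('e \<Rightarrow> real \<Rightarrow> real^3) \<Rightarrow> (real^3) set \<Rightarrow> bool"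
  have split: "{F \<in> cells V E g. is_B4 V E g F \<or> is_B5 V E g F \<or> is_U5 V E g F \<or> is_U6 V E g F} =
      T is_B4 \<union> T is_B5 \<union> T is_U5 \<union> T is_U6"
    unfolding T_def by blast
  have fin: "finite (T is_B4)" "finite (T is_B5)" "finite (T is_U5)" "finite (T is_U6)"
    using assms unfolding split by auto
  have profiles: "F \<in> T is_B4 \<Longrightarrow> boundary_profile V E g F = (1, 2)"
    "F \<in> T is_B5 \<Longrightarrow> boundary_profile V E g F = (1, 3)"
    "F \<in> T is_U5 \<Longrightarrow> boundary_profile V E g F = (2, 1)"
    "F \<in> T is_U6 \<Longrightarrow> boundary_profile V E g F = (2, 2)" for F
    using is_B4_boundary(1) is_B5_boundary(1) is_U5_boundary(1) is_U6_boundary(1)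
    unfolding T_def by blast+
  have "card (T is_B4 \<union> T is_B5 \<union> T is_U5 \<union> T is_U6) =
      card (T is_B4) + card (T is_B5) + card (T is_U5) + card (T is_U6)"
  proof -
    have "T is_B4 \<inter> T is_B5 = {}" "(T is_B4 \<union> T is_B5) \<inter> T is_U5 = {}"
      "(T is_B4 \<union> T is_B5 \<union> T is_U5) \<inter> T is_U6 = {}"
      using profiles by fastforce+
    then show ?thesis using fin by (simp add: card_Un_disjoint)
  qed
  then show ?thesis unfolding split by (simp add: num_cells_def T_def)
qed

end

theorem mainTheorem5:
  fixes V :: "(real^3) set" and E :: "'e set" and g :: "'e \<Rightarrow> real \<Rightarrow> real^3"
  assumes "drawing V E g" and "three_plane V E g" and "connected_drawing V E g"
  shows "2 * num_cells V E g is_B4 + 2 * num_cells V E g is_B5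
           + 2 * num_cells V E g is_U5 + 2 * num_cells V E g is_U6
         \<le> 4 * card (crossed_edges V E g)"
proof -
  let ?O = "outer_segments V E g"
  let ?T = "{F \<in> cells V E g. is_B4 V E g F \<or> is_B5 V E g F \<or> is_U5 V E g F \<or> is_U6 V E g F}"
  have O: "finite ?O" "card ?O \<le> 2 * card (crossed_edges V E g)"
    using outer_segments_card[OF assms(1,2)] by blast+
  have "2 \<le> card {s \<in> ?O. s \<subseteq> closure F}" if F: "F \<in> ?T" for F
  proof -
    have type: "is_B4 V E g F \<or> is_B5 V E g F \<or> is_U5 V E g F \<or> is_U6 V E g F" using F by simp
    obtain s s' where "s \<in> ?O" "s' \<in> ?O" "s \<noteq> s'" "s \<union> s' \<subseteq> cell_bd F"
      using four_types_outer_segments[OF assms(1) type] by blast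
    then have "{s, s'} \<subseteq> {s \<in> ?O. s \<subseteq> closure F}" by (auto simp: cell_bd_def)
    then have "card {s, s'} \<le> card {s \<in> ?O. s \<subseteq> closure F}" using O(1) by (intro card_mono) auto
    then show ?thesis using \<open>s \<noteq> s'\<close> by simp
  qed
  moreover have "finite {F \<in> ?T. s \<subseteq> closure F} \<and> card {F \<in> ?T. s \<subseteq> closure F} \<le> 2"
    if "s \<in> ?O" for s
  proof -
    have sub: "{F \<in> ?T. s \<subseteq> closure F} \<subseteq> {F \<in> cells V E g. s \<subseteq> closure F}" by blast
    show ?thesis using cells_touching_outer_segment[OF assms(1) that] finite_subset[OF sub]
        card_mono[OF _ sub] by fastforce
  qed
  ultimately have "finite ?T" "2 * card ?T \<le> 2 * card ?O"
    using double_counting_le[OF O(1), of 2 ?T "\<lambda>F s. s \<subseteq> closure F" 2] by auto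
  then show ?thesis using card_cells_of_four_types[OF assms(1)] O(2) by linarith
qed

end
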